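(* Let $D\in\mathcal{O}_d$ be a discriminant and let $(t,u)\in\mathcal{O}_d^2$ satisfy $t^2-Du^2=4$ and $4<|t|<\frac49|u|^2$. Let $\tau\in\mathcal{O}_d/u\mathcal{O}_d$ be the residue class of $\frac{t-\beta u}{2}$, where $\beta,\xi\in\mathcal{O}_d$ are any elements with $D=\beta^2+4\xi$. Then every loxodromic element $B\in\mathrm{SL}_2(\mathcal{O}_d)_\tau[u]$ satisfies $$4\cosh(\ell(B))\ge|t|^2+|t^2-4|.$$ In particular, if a loxodromic element $B\in\mathrm{SL}_2(\mathcal{O}_d)_\tau[u]$ has $\mathrm{tr}(B)=t$, then $\ell(B)$ is the minimum of the translation lengths of loxodromic elements of $\mathrm{SL}_2(\mathcal{O}_d)_\tau[u]$, i.e. $B$ determines a closed geodesic of shortest length in $\mathrm{SL}_2(\mathcal{O}_d)_\tau[u]\backslash\mathbb{H}^3$.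
   Context: $d\in\{1,2,3,7,11,19,43,67,163\}$ (so $k_d=\mathbb{Q}(\sqrt{-d})$ has class number one), $\mathcal{O}_d$ is the ring of integers of $k_d$. An element $D\in\mathcal{O}_d$ is a discriminant if $D$ is not a perfect square in $\mathcal{O}_d$ and $D\equiv x^2\pmod{4\mathcal{O}_d}$ for some $x\in\mathcal{O}_d$; then $D=\beta^2+4\xi$ for some $\beta,\xi\in\mathcal{O}_d$, $\frac{t-\beta u}{2}\in\mathcal{O}_d$, and its class $\tau$ modulo $u\mathcal{O}_d$ is independent of the choice of $\beta,\xi$ and satisfies $\tau^2=1$ in $\mathcal{O}_d/u\mathcal{O}_d$. With $\pi_u:\mathrm{SL}_2(\mathcal{O}_d)\to\mathrm{SL}_2(\mathcal{O}_d/u\mathcal{O}_d)$ the reduction map and $\mathrm{Id}$ the identity matrix, $\mathrm{SL}_2(\mathcal{O}_d)_\tau[u]:=\pi_u^{-1}(\{\mathrm{Id},\tau\,\mathrm{Id}\})$. An element $B\in\mathrm{SL}_2(\mathbb{C})$ is loxodromic if $\mathrm{tr}(B)\notin[-2,2]$, and $\ell(B)$ denotes its translation length along its axis in $\mathbb{H}^3$. *)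

theory Defs
  imports "HOL-Analysis.Analysis"
begin

definition class_number_one_d :: "nat set" where
  "class_number_one_d = {1,2,3,7,11,19,43,67,163}"

text \<open>Generator of the ring of integers of Q(sqrt(-d)), d squarefree positive.\<close>
definition omega_d :: "nat \<Rightarrow> complex" where
  "omega_d d = (if d mod 4 = 3 then (1 + \<i> * complex_of_real (sqrt (real d))) / 2
                else \<i> * complex_of_real (sqrt (real d)))"

definition O_d :: "nat \<Rightarrow> complex set" where
  "O_d d = {of_int a + of_int b * omega_d d | a b. True}"

definition dvdO :: "nat \<Rightarrow> complex \<Rightarrow> complex \<Rightarrow> bool" where
  "dvdO d m x \<longleftrightarrow> (\<exists>y \<in> O_d d. x = m * y)"

definition discriminant :: "nat \<Rightarrow> complex \<Rightarrow> bool" where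
  "discriminant d D \<longleftrightarrow> D \<in> O_d d \<and> \<not> (\<exists>x \<in> O_d d. D = x\<^sup>2) \<and>
     (\<exists>x \<in> O_d d. dvdO d 4 (D - x\<^sup>2))"

definition SL2O :: "nat \<Rightarrow> (complex^2^2) set" where
  "SL2O d = {B. det B = 1 \<and> (\<forall>i j. B $ i $ j \<in> O_d d)}"

text \<open>Congruence subgroup SL_2(O_d)_tau[u] = preimage of {Id, tau Id} under reduction mod u;
  tau is given by a representative c in O_d.\<close>
definition congruent_scalar :: "nat \<Rightarrow> complex \<Rightarrow> complex \<Rightarrow> complex^2^2 \<Rightarrow> bool" where
  "congruent_scalar d u c B \<longleftrightarrow>
     dvdO d u (B $ 1 $ 1 - c) \<and> dvdO d u (B $ 2 $ 2 - c) \<and>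
     dvdO d u (B $ 1 $ 2) \<and> dvdO d u (B $ 2 $ 1)"

definition SL2O_tau :: "nat \<Rightarrow> complex \<Rightarrow> complex \<Rightarrow> (complex^2^2) set" where
  "SL2O_tau d tau u = {B \<in> SL2O d. congruent_scalar d u 1 B \<or> congruent_scalar d u tau B}"

definition loxodromic :: "complex^2^2 \<Rightarrow> bool" where
  "loxodromic B \<longleftrightarrow> \<not> (Im (trace B) = 0 \<and> \<bar>Re (trace B)\<bar> \<le> 2)"

text \<open>Translation length: for B conjugate to diag(lambda, 1/lambda) with |lambda| > 1,
  B acts on H^3 as z \<mapsto> lambda^2 z, so the translation length is 2 ln |lambda|,
  lambda the eigenvalue of largest modulus.\<close>
definition translation_length :: "complex^2^2 \<Rightarrow> real" where
  "translation_length B =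
     2 * ln (Max {cmod lam | lam. lam\<^sup>2 - trace B * lam + det B = 0})"

end

theory Submission
  imports Defs
begin

text \<open>
  By the eigenvalue description of the translation length,
  \<open>4 cosh \<ell>(B) = |tr B|\<^sup>2 + |tr B\<^sup>2 - 4|\<close> whenever \<open>det B = 1\<close>.
  Write \<open>B = c Id + u Y\<close> with \<open>c \<in> {1, \<tau>}\<close>. The Pell equation gives
  \<open>\<tau>\<^sup>2 + \<beta> \<tau> u - \<xi> u\<^sup>2 = 1\<close>, so \<open>\<tau>\<close> is a unit modulo \<open>u\<close>, and \<open>det B = 1\<close> then
  forces \<open>tr B \<equiv> 2 c + \<beta> u (mod u\<^sup>2)\<close> (with \<open>\<beta> = 0\<close> for \<open>c = 1\<close>), i.e. \<open>tr B \<equiv> 2\<close> or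
  \<open>tr B \<equiv> t\<close>. Nonzero elements of \<open>O_d\<close> have modulus at least 1, so either \<open>tr B = t\<close>
  (\<open>tr B = 2\<close> is excluded by loxodromy) or \<open>|tr B| \<ge> |u|\<^sup>2 - |t| > 5/4 |t|\<close>, and in the
  latter case the right-hand side above exceeds its value at \<open>t\<close>.
\<close>

definition omega_trace :: "nat \<Rightarrow> int" where
  "omega_trace d = (if d mod 4 = 3 then 1 else 0)"

definition omega_norm :: "nat \<Rightarrow> int" where
  "omega_norm d = (if d mod 4 = 3 then (int d + 1) div 4 else int d)"

lemma omega_d_add_cnj: "omega_d d + cnj (omega_d d) = of_int (omega_trace d)"
  by (simp add: omega_d_def omega_trace_def complex_eq_iff)

lemma omega_d_mult_cnj: "omega_d d * cnj (omega_d d) = of_int (omega_norm d)"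
proof -
  have "(Re (omega_d d))\<^sup>2 + (Im (omega_d d))\<^sup>2 = of_int (omega_norm d)"
  proof (cases "d mod 4 = 3")
    case True
    then have "int d + 1 = 4 * ((int d + 1) div 4)"
      by presburger
    then have "real d + 1 = 4 * real_of_int ((int d + 1) div 4)"
      by (metis of_int_1 of_int_add of_int_mult of_int_numeral of_int_of_nat_eq)
    with True show ?thesis
      by (simp add: omega_d_def omega_norm_def power_divide)
  next
    case False
    then show ?thesis
      by (simp add: omega_d_def omega_norm_def)
  qed
  then show ?thesis
    by (simp add: complex_mult_cnj)
qed

lemma omega_d_square:
  "(omega_d d)\<^sup>2 = of_int (omega_trace d) * omega_d d - of_int (omega_norm d)"
  by (simp flip: omega_d_add_cnj omega_d_mult_cnj add: power2_eq_square algebra_simps)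

lemma O_d_iff: "z \<in> O_d d \<longleftrightarrow> (\<exists>a b. z = of_int a + of_int b * omega_d d)"
  by (auto simp: O_d_def)

lemma O_d_coords: "of_int a + of_int b * omega_d d \<in> O_d d"
  by (auto simp: O_d_def)

lemma of_int_in_O_d [simp]: "of_int a \<in> O_d d"
  using O_d_coords[of a 0] by simp

lemma zero_in_O_d [simp]: "0 \<in> O_d d" and one_in_O_d [simp]: "1 \<in> O_d d"
  using of_int_in_O_d[of 0 d] of_int_in_O_d[of 1 d] by simp_all

lemma O_d_add [intro]: "x \<in> O_d d \<Longrightarrow> y \<in> O_d d \<Longrightarrow> x + y \<in> O_d d"
proof -
  assume "x \<in> O_d d" "y \<in> O_d d"
  then obtain a b p q where "x = of_int a + of_int b * omega_d d"
    and "y = of_int p + of_int q * omega_d d"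
    unfolding O_d_iff by blast
  then have "x + y = of_int (a + p) + of_int (b + q) * omega_d d"
    by (simp add: algebra_simps)
  then show ?thesis
    by (metis O_d_coords)
qed

lemma O_d_uminus [intro]: "x \<in> O_d d \<Longrightarrow> - x \<in> O_d d"
proof -
  assume "x \<in> O_d d"
  then obtain a b where "x = of_int a + of_int b * omega_d d"
    unfolding O_d_iff by blast
  then have "- x = of_int (- a) + of_int (- b) * omega_d d"
    by simp
  then show ?thesis
    by (metis O_d_coords)
qed

lemma O_d_diff [intro]: "x \<in> O_d d \<Longrightarrow> y \<in> O_d d \<Longrightarrow> x - y \<in> O_d d"
  using O_d_add[of x d "- y"] by auto

lemma O_d_mult [intro]: "x \<in> O_d d \<Longrightarrow> y \<in> O_d d \<Longrightarrow> x * y \<in> O_d d"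
proof -
  assume "x \<in> O_d d" "y \<in> O_d d"
  then obtain a b p q where x: "x = of_int a + of_int b * omega_d d"
    and y: "y = of_int p + of_int q * omega_d d"
    unfolding O_d_iff by blast
  have "x * y = of_int a * of_int p + (of_int a * of_int q + of_int b * of_int p) * omega_d d
      + of_int b * of_int q * (omega_d d)\<^sup>2"
    unfolding x y by (simp add: algebra_simps power2_eq_square)
  also have "\<dots> = of_int (a * p - omega_norm d * b * q)
      + of_int (a * q + b * p + omega_trace d * b * q) * omega_d d"
    unfolding omega_d_square by (simp add: algebra_simps)
  finally show ?thesis
    by (metis O_d_coords)
qed

lemma cnj_in_O_d: "z \<in> O_d d \<Longrightarrow> cnj z \<in> O_d d"
proof -
  assume "z \<in> O_d d"
  then obtain a b where z: "z = of_int a + of_int b * omega_d d"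
    unfolding O_d_iff by blast
  have "cnj z = of_int (a + b * omega_trace d) + of_int (- b) * omega_d d"
    unfolding z by (simp add: algebra_simps flip: omega_d_add_cnj)
  then show ?thesis
    by (metis O_d_coords)
qed

lemma O_d_real_in_Ints:
  assumes "d > 0" "z \<in> O_d d" "Im z = 0"
  shows "z \<in> \<int>"
proof -
  obtain a b where z: "z = of_int a + of_int b * omega_d d"
    using assms(2) unfolding O_d_iff by blast
  have "Im (omega_d d) \<noteq> 0"
    using assms(1) by (simp add: omega_d_def)
  with assms(3) have "b = 0"
    unfolding z by simp
  then show ?thesis
    unfolding z by simp
qed

lemma O_d_norm_ge_1:
  assumes "d > 0" "z \<in> O_d d" "z \<noteq> 0"
  shows "1 \<le> cmod z"
proof -
  have "complex_of_real ((cmod z)\<^sup>2) \<in> O_d d"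
    unfolding complex_norm_square using assms(2) by (intro O_d_mult cnj_in_O_d)
  then have "complex_of_real ((cmod z)\<^sup>2) \<in> \<int>"
    using O_d_real_in_Ints[OF assms(1)] Im_complex_of_real by blast
  then have "(cmod z)\<^sup>2 \<in> \<int>"
    by (simp only: of_real_in_Ints_iff)
  then have "1 \<le> (cmod z)\<^sup>2"
    using Ints_nonzero_abs_ge1[of "(cmod z)\<^sup>2"] assms(3) by simp
  then show ?thesis
    by (metis abs_norm_cancel abs_square_less_1 not_le)
qed

lemma trace_2: "trace (B :: 'a::comm_ring_1^2^2) = B$1$1 + B$2$2"
  by (simp add: trace_def sum_2)

lemma translation_length_eigenvalues:
  fixes B :: "complex^2^2"
  assumes "det B = 1"
  obtains l1 l2 where "l1 + l2 = trace B" and "l1 * l2 = 1"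
    and "translation_length B = 2 * ln (max (cmod l1) (cmod l2))"
proof -
  define r where "r = csqrt ((trace B)\<^sup>2 - 4)"
  define l1 where "l1 = (trace B + r) / 2"
  define l2 where "l2 = (trace B - r) / 2"
  have sum: "l1 + l2 = trace B"
    by (simp add: l1_def l2_def field_simps)
  have prod: "l1 * l2 = 1"
  proof -
    have "l1 * l2 = ((trace B)\<^sup>2 - r\<^sup>2) / 4"
      by (simp add: l1_def l2_def field_simps power2_eq_square)
    then show ?thesis
      by (simp add: r_def)
  qed
  have "lam\<^sup>2 - trace B * lam + det B = (lam - l1) * (lam - l2)" for lam
    using assms prod by (simp flip: sum add: power2_eq_square algebra_simps)
  then have "{cmod lam | lam. lam\<^sup>2 - trace B * lam + det B = 0} = {cmod l1, cmod l2}"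
    by auto
  then have "translation_length B = 2 * ln (max (cmod l1) (cmod l2))"
    by (simp add: translation_length_def)
  with sum prod show ?thesis
    using that by blast
qed

lemma cosh_two_ln_max:
  fixes a b :: real
  assumes "a * b = 1" "a > 0"
  shows "4 * cosh (2 * ln (max a b)) = 2 * (a\<^sup>2 + b\<^sup>2)"
proof -
  have b: "b = inverse a" "b > 0"
    using inverse_unique[OF assms(1)] assms(2) by auto
  define M where "M = max a b"
  have "M > 0" and "M\<^sup>2 + inverse (M\<^sup>2) = a\<^sup>2 + b\<^sup>2"
    using assms(2) b by (auto simp: M_def max_def power_inverse)
  moreover have "2 * ln M = ln (M\<^sup>2)"
    using \<open>M > 0\<close> by (simp add: ln_mult power2_eq_square)
  ultimately show ?thesis
    unfolding M_def[symmetric] by (simp add: cosh_ln_real)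
qed

lemma cosh_translation_length:
  fixes B :: "complex^2^2"
  assumes "det B = 1"
  shows "4 * cosh (translation_length B) = (cmod (trace B))\<^sup>2 + cmod ((trace B)\<^sup>2 - 4)"
proof -
  obtain l1 l2 where sum: "l1 + l2 = trace B" and prod: "l1 * l2 = 1"
    and len: "translation_length B = 2 * ln (max (cmod l1) (cmod l2))"
    using translation_length_eigenvalues[OF assms] .
  have "cmod l1 * cmod l2 = 1" "cmod l1 > 0"
    using prod by (auto simp flip: norm_mult)
  then have "4 * cosh (translation_length B) = 2 * ((cmod l1)\<^sup>2 + (cmod l2)\<^sup>2)"
    unfolding len by (rule cosh_two_ln_max)
  also have "\<dots> = (cmod (l1 + l2))\<^sup>2 + (cmod (l1 - l2))\<^sup>2"
    by (simp only: cmod_power2) (simp add: power2_eq_square algebra_simps)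
  also have "(cmod (l1 - l2))\<^sup>2 = cmod ((l1 - l2)\<^sup>2)"
    by (simp add: norm_power)
  also have "(l1 - l2)\<^sup>2 = (l1 + l2)\<^sup>2 - 4 * (l1 * l2)"
    by (simp add: power2_eq_square algebra_simps)
  finally show ?thesis
    by (simp add: sum prod)
qed

lemma translation_length_nonneg:
  fixes B :: "complex^2^2"
  assumes "det B = 1"
  shows "0 \<le> translation_length B"
proof -
  obtain l1 l2 where prod: "l1 * l2 = 1"
    and len: "translation_length B = 2 * ln (max (cmod l1) (cmod l2))"
    using translation_length_eigenvalues[OF assms] .
  have "cmod l1 * cmod l2 = 1"
    using prod by (simp flip: norm_mult)
  have "1 \<le> max (cmod l1) (cmod l2)"
  proof (rule ccontr)
    assume "\<not> 1 \<le> max (cmod l1) (cmod l2)"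
    then have "cmod l1 * cmod l2 < 1 * 1"
      by (intro mult_strict_mono) auto
    with \<open>cmod l1 * cmod l2 = 1\<close> show False
      by simp
  qed
  then show ?thesis
    unfolding len by simp
qed

lemma cosh_trace_expr_mono:
  fixes T t :: complex
  assumes "5 / 4 * cmod t \<le> cmod T" and "4 < cmod t"
  shows "(cmod t)\<^sup>2 + cmod (t\<^sup>2 - 4) \<le> (cmod T)\<^sup>2 + cmod (T\<^sup>2 - 4)"
proof -
  have "(cmod T)\<^sup>2 - 4 \<le> cmod (T\<^sup>2 - 4)"
    using norm_triangle_ineq2[of "T\<^sup>2" 4] by (simp add: norm_power)
  moreover have "cmod (t\<^sup>2 - 4) \<le> (cmod t)\<^sup>2 + 4"
    using norm_triangle_ineq4[of "t\<^sup>2" 4] by (simp add: norm_power)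
  moreover have "(5 / 4 * cmod t) * (5 / 4 * cmod t) \<le> cmod T * cmod T"
    using assms(1) by (intro mult_mono) auto
  moreover have "4 * 4 < cmod t * cmod t"
    using assms(2) by (intro mult_strict_mono) auto
  ultimately show ?thesis
    unfolding power2_eq_square by linarith
qed

lemma cosh_translation_length_ge:
  fixes B :: "complex^2^2"
  assumes "det B = 1" and "4 < cmod t" and "trace B = t \<or> 5 / 4 * cmod t \<le> cmod (trace B)"
  shows "(cmod t)\<^sup>2 + cmod (t\<^sup>2 - 4) \<le> 4 * cosh (translation_length B)"
  unfolding cosh_translation_length[OF assms(1)]
  using assms(3) cosh_trace_expr_mono[OF _ assms(2)] by auto

text \<open>The hypothesis on \<open>c\<close> makes it a unit modulo \<open>u\<close>; together with \<open>det B = 1\<close> this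
  forces \<open>u\<close> to divide \<open>s - \<beta>\<close>, where \<open>s\<close> is the quotient of \<open>trace B - 2 c\<close> by \<open>u\<close>.\<close>
lemma trace_congruent_scalar:
  assumes B: "B \<in> SL2O d" and cong: "congruent_scalar d u c B" and "u \<noteq> 0"
    and "u \<in> O_d d" "\<beta> \<in> O_d d" "\<xi> \<in> O_d d"
    and unit: "c\<^sup>2 + c * \<beta> * u - \<xi> * u\<^sup>2 = 1"
  shows "\<exists>n \<in> O_d d. trace B = 2 * c + \<beta> * u + u\<^sup>2 * n"
proof -
  obtain y1 y2 y3 y4 where y: "y1 \<in> O_d d" "y2 \<in> O_d d" "y3 \<in> O_d d" "y4 \<in> O_d d"
    and e: "B$1$1 - c = u * y1" "B$2$2 - c = u * y2" "B$1$2 = u * y3" "B$2$1 = u * y4"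
    using cong unfolding congruent_scalar_def dvdO_def by blast
  have "c = B$1$1 - u * y1"
    unfolding e(1)[symmetric] by simp
  then have "c \<in> O_d d"
    using B y \<open>u \<in> O_d d\<close> unfolding SL2O_def by auto
  define s where "s = y1 + y2"
  define \<delta> where "\<delta> = y1 * y2 - y3 * y4"
  define m where "m = s - \<beta>"
  define n where "n = m * (c * s + u * \<delta>) - c * (\<delta> + \<xi>)"
  have "n \<in> O_d d"
    unfolding n_def m_def s_def \<delta>_def using y assms(4-6) \<open>c \<in> O_d d\<close>
    by (intro O_d_diff O_d_add O_d_mult) simp_all
  have diag: "B$1$1 = c + u * y1" "B$2$2 = c + u * y2"
    using e by (simp_all add: algebra_simps)
  have "B$1$1 * B$2$2 - B$1$2 * B$2$1 = 1"
    using B unfolding SL2O_def by (simp flip: det_2)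
  then have det: "c\<^sup>2 + u * c * s + u\<^sup>2 * \<delta> = 1"
    unfolding diag e(3,4) s_def \<delta>_def by (simp add: power2_eq_square algebra_simps)
  have "u * (c * m + u * (\<delta> + \<xi>)) = (c\<^sup>2 + u * c * s + u\<^sup>2 * \<delta>) - (c\<^sup>2 + c * \<beta> * u - \<xi> * u\<^sup>2)"
    unfolding m_def by (simp add: power2_eq_square algebra_simps)
  also have "\<dots> = 0"
    using det unit by simp
  finally have cm: "c * m = - u * (\<delta> + \<xi>)"
    using \<open>u \<noteq> 0\<close> by (simp add: eq_neg_iff_add_eq_0)
  have "m = m * (c\<^sup>2 + u * c * s + u\<^sup>2 * \<delta>)"
    using det by simp
  also have "\<dots> = c * (c * m) + u * (m * (c * s + u * \<delta>))"
    by (simp add: power2_eq_square algebra_simps)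
  also have "\<dots> = u * n"
    unfolding cm n_def by (simp add: algebra_simps)
  finally have "m = u * n" .
  have "trace B = 2 * c + \<beta> * u + u * m"
    unfolding trace_2 diag m_def s_def by (simp add: algebra_simps)
  also have "\<dots> = 2 * c + \<beta> * u + u\<^sup>2 * n"
    unfolding \<open>m = u * n\<close> by (simp add: power2_eq_square)
  finally show ?thesis
    using \<open>n \<in> O_d d\<close> by blast
qed

lemma norm_add_square_mult_ge:
  assumes "d > 0" "n \<in> O_d d" "n \<noteq> 0"
  shows "(cmod u)\<^sup>2 - cmod a \<le> cmod (a + u\<^sup>2 * n)"
proof -
  have "(cmod u)\<^sup>2 \<le> cmod (u\<^sup>2 * n)"
    using O_d_norm_ge_1[OF assms] by (simp add: norm_mult norm_power mult_le_cancel_left1)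
  then show ?thesis
    using norm_diff_ineq[of "u\<^sup>2 * n" a] by (simp add: add.commute)
qed

lemma SL2O_tau_trace_eq_or_large:
  assumes "d > 0" and B: "B \<in> SL2O_tau d \<tau> u" and lox: "loxodromic B"
    and "u \<in> O_d d" "\<beta> \<in> O_d d" "\<xi> \<in> O_d d"
    and t: "t = 2 * \<tau> + \<beta> * u" and unit: "\<tau>\<^sup>2 + \<tau> * \<beta> * u - \<xi> * u\<^sup>2 = 1"
    and "4 < cmod t" and "cmod t < 4 / 9 * (cmod u)\<^sup>2"
  shows "trace B = t \<or> 5 / 4 * cmod t \<le> cmod (trace B)"
proof -
  have "u \<noteq> 0"
    using assms(9,10) by auto
  from B consider "B \<in> SL2O d" "congruent_scalar d u 1 B" | "B \<in> SL2O d" "congruent_scalar d u \<tau> B"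
    unfolding SL2O_tau_def by blast
  then show ?thesis
  proof cases
    case 1
    then obtain n where "n \<in> O_d d" and tr: "trace B = 2 + u\<^sup>2 * n"
      using trace_congruent_scalar[of B d u 1 0 0] \<open>u \<noteq> 0\<close> \<open>u \<in> O_d d\<close> by auto
    with lox have "n \<noteq> 0"
      by (auto simp: loxodromic_def)
    then have "(cmod u)\<^sup>2 - 2 \<le> cmod (trace B)"
      using norm_add_square_mult_ge[OF \<open>d > 0\<close> \<open>n \<in> O_d d\<close>, of u 2] tr by simp
    with assms(9,10) show ?thesis
      by simp
  next
    case 2
    then obtain n where "n \<in> O_d d" and tr: "trace B = t + u\<^sup>2 * n"
      using trace_congruent_scalar[OF _ _ \<open>u \<noteq> 0\<close> assms(4-6) unit] t by auto
    show ?thesis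
    proof (cases "n = 0")
      case False
      then have "(cmod u)\<^sup>2 - cmod t \<le> cmod (trace B)"
        using norm_add_square_mult_ge[OF \<open>d > 0\<close> \<open>n \<in> O_d d\<close>, of u t] tr by simp
      with assms(9,10) show ?thesis
        by simp
    qed (simp add: tr)
  qed
qed

theorem proposition4p4:
  fixes d :: nat and D t u \<beta> \<xi> :: complex
  assumes hd: "d \<in> class_number_one_d"
    and hD: "discriminant d D"
    and ht: "t \<in> O_d d" and hu: "u \<in> O_d d"
    and hpell: "t\<^sup>2 - D * u\<^sup>2 = 4"
    and hlow: "4 < cmod t" and hup: "cmod t < 4 / 9 * (cmod u)\<^sup>2"
    and h\<beta>: "\<beta> \<in> O_d d" and h\<xi>: "\<xi> \<in> O_d d"
    and hdec: "D = \<beta>\<^sup>2 + 4 * \<xi>"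
  shows "(\<forall>B \<in> SL2O_tau d ((t - \<beta> * u) / 2) u. loxodromic B \<longrightarrow>
            4 * cosh (translation_length B) \<ge> (cmod t)\<^sup>2 + cmod (t\<^sup>2 - 4))
       \<and> (\<forall>B \<in> SL2O_tau d ((t - \<beta> * u) / 2) u. loxodromic B \<and> trace B = t \<longrightarrow>
            (\<forall>B' \<in> SL2O_tau d ((t - \<beta> * u) / 2) u. loxodromic B' \<longrightarrow>
               translation_length B \<le> translation_length B'))"
proof -
  have "d > 0"
    using hd by (auto simp: class_number_one_d_def)
  define \<tau> where "\<tau> = (t - \<beta> * u) / 2"
  have t: "t = 2 * \<tau> + \<beta> * u"
    by (simp add: \<tau>_def field_simps)
  have unit: "\<tau>\<^sup>2 + \<tau> * \<beta> * u - \<xi> * u\<^sup>2 = 1"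
  proof -
    have "\<tau>\<^sup>2 + \<tau> * \<beta> * u - \<xi> * u\<^sup>2 = (t\<^sup>2 - D * u\<^sup>2) / 4"
      unfolding hdec t by (simp add: power2_eq_square field_simps)
    with hpell show ?thesis
      by simp
  qed
  have det: "det B = 1" if "B \<in> SL2O_tau d \<tau> u" for B
    using that by (simp add: SL2O_tau_def SL2O_def)
  have bound: "(cmod t)\<^sup>2 + cmod (t\<^sup>2 - 4) \<le> 4 * cosh (translation_length B)"
    if "B \<in> SL2O_tau d \<tau> u" "loxodromic B" for B
    using cosh_translation_length_ge[OF det[OF that(1)] hlow
        SL2O_tau_trace_eq_or_large[OF \<open>d > 0\<close> that hu h\<beta> h\<xi> t unit hlow hup]] .
  have "translation_length B \<le> translation_length B'"
    if "B \<in> SL2O_tau d \<tau> u" "trace B = t" "B' \<in> SL2O_tau d \<tau> u" "loxodromic B'" for B B'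
  proof -
    have "cosh (translation_length B) \<le> cosh (translation_length B')"
      using bound[OF that(3,4)] cosh_translation_length[OF det[OF that(1)]] that(2) by simp
    then show ?thesis
      using translation_length_nonneg det that by (simp add: cosh_real_nonneg_le_iff)
  qed
  with bound show ?thesis
    unfolding \<tau>_def by blast
qed

end
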